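(* Let $\mathfrak{b}\subset\mathfrak{g}=\mathfrak{gl}(n+1,\mathbb{C})$ be a Borel subalgebra containing the Cartan subalgebra of diagonal matrices. Then $\mathfrak{b}$ contains strongly regular elements of $\mathfrak{g}$.
   Context: For $x\in\mathfrak{g}$ and $1\le i\le n+1$, $x_i$ denotes the upper left $i\times i$ submatrix of $x$, and $f_{i,j}(x)=\mathrm{Tr}(x_i^j)$ for $1\le j\le i\le n+1$. An element $x\in\mathfrak{g}$ is strongly regular if the differentials $\{df_{i,j}(x):1\le j\le i\le n+1\}$ are linearly independent in $T_x^*\mathfrak{g}$. *)

theory Defs
  imports "HOL-Analysis.Derivative" "Jordan_Normal_Form.Matrix"
begin

text \<open>Complex N x N matrices (here N = n+1) are elements of carrier_mat N N,
  i.e. the Lie algebra gl(N, C) with bracket [a,b] = a*b - b*a.\<close>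

definition lie_bracket :: "complex mat \<Rightarrow> complex mat \<Rightarrow> complex mat" where
  "lie_bracket a b = a * b - b * a"

fun mat_lincomb :: "nat \<Rightarrow> (nat \<Rightarrow> complex) \<Rightarrow> (nat \<Rightarrow> complex mat) \<Rightarrow> nat \<Rightarrow> complex mat" where
  "mat_lincomb N c A 0 = 0\<^sub>m N N"
| "mat_lincomb N c A (Suc m) = mat_lincomb N c A m + c m \<cdot>\<^sub>m A m"

definition mat_span :: "nat \<Rightarrow> complex mat set \<Rightarrow> complex mat set" where
  "mat_span N S = {mat_lincomb N c A m | c A m. \<forall>k<m. A k \<in> S}"

definition lie_subalgebra :: "nat \<Rightarrow> complex mat set \<Rightarrow> bool" where
  "lie_subalgebra N L \<longleftrightarrow> L \<subseteq> carrier_mat N N \<and> 0\<^sub>m N N \<in> L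
     \<and> (\<forall>a\<in>L. \<forall>b\<in>L. a + b \<in> L)
     \<and> (\<forall>t. \<forall>a\<in>L. t \<cdot>\<^sub>m a \<in> L)
     \<and> (\<forall>a\<in>L. \<forall>b\<in>L. lie_bracket a b \<in> L)"

fun derived_series :: "nat \<Rightarrow> complex mat set \<Rightarrow> nat \<Rightarrow> complex mat set" where
  "derived_series N L 0 = L"
| "derived_series N L (Suc k) =
     mat_span N {lie_bracket a b | a b. a \<in> derived_series N L k \<and> b \<in> derived_series N L k}"

definition solvable_lie :: "nat \<Rightarrow> complex mat set \<Rightarrow> bool" where
  "solvable_lie N L \<longleftrightarrow> (\<exists>k. derived_series N L k = {0\<^sub>m N N})"

definition borel_subalgebra :: "nat \<Rightarrow> complex mat set \<Rightarrow> bool" where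
  "borel_subalgebra N B \<longleftrightarrow> lie_subalgebra N B \<and> solvable_lie N B
     \<and> (\<forall>B'. lie_subalgebra N B' \<and> solvable_lie N B' \<and> B \<subseteq> B' \<longrightarrow> B' = B)"

definition diagonal_cartan :: "nat \<Rightarrow> complex mat set" where
  "diagonal_cartan N = {x \<in> carrier_mat N N. \<forall>i<N. \<forall>j<N. i \<noteq> j \<longrightarrow> x $$ (i, j) = 0}"

definition upper_left :: "nat \<Rightarrow> complex mat \<Rightarrow> complex mat" where
  "upper_left i x = mat i i (\<lambda>(a, b). x $$ (a, b))"

definition mat_trace :: "complex mat \<Rightarrow> complex" where
  "mat_trace A = (\<Sum>k<dim_row A. A $$ (k, k))"

definition f_ij :: "nat \<Rightarrow> nat \<Rightarrow> complex mat \<Rightarrow> complex" where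
  "f_ij i j x = mat_trace (upper_left i x ^\<^sub>m j)"

definition differential :: "(complex mat \<Rightarrow> complex) \<Rightarrow> complex mat \<Rightarrow> complex mat \<Rightarrow> complex" where
  "differential f x y = deriv (\<lambda>t::complex. f (x + t \<cdot>\<^sub>m y)) 0"

definition GZ_index :: "nat \<Rightarrow> (nat \<times> nat) set" where
  "GZ_index N = {(i, j). 1 \<le> j \<and> j \<le> i \<and> i \<le> N}"

definition strongly_regular :: "nat \<Rightarrow> complex mat \<Rightarrow> bool" where
  "strongly_regular N x \<longleftrightarrow> x \<in> carrier_mat N N \<and>
     (\<forall>c :: nat \<times> nat \<Rightarrow> complex.
        (\<forall>y\<in>carrier_mat N N. (\<Sum>(i, j)\<in>GZ_index N. c (i, j) * differential (f_ij i j) x y) = 0)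
        \<longrightarrow> (\<forall>p\<in>GZ_index N. c p = 0))"

end

theory Submission
  imports Defs "HOL-Computational_Algebra.Polynomial"
begin

text \<open>A Borel subalgebra \<open>B\<close> containing the diagonal matrices is spanned by them and by the
  matrix units \<open>E\<^sub>a\<^sub>b\<close> with \<open>a \<prec> b\<close> for a strict linear order \<open>\<prec>\<close> on the indices:
  bracketing with diagonal matrix units extracts \<open>E\<^sub>a\<^sub>b\<close> from any element with a nonzero
  \<open>(a, b)\<close> entry, \<open>E\<^sub>a\<^sub>b\<close> and \<open>E\<^sub>b\<^sub>a\<close> cannot both lie in \<open>B\<close> since they span a copy of
  \<open>sl\<^sub>2\<close>, and by maximality \<open>\<prec>\<close> is total. So \<open>B\<close> contains
  \<open>X = diag(0, 2, 4, \<dots>) + \<Sum>\<^bsub>a \<prec> b\<^esub> E\<^sub>a\<^sub>b\<close>, and every upper left block \<open>X\<^sub>i\<close> has the same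
  shape. Its eigenvalues are distinct and never differ by \<open>1\<close>, which makes the eigenvector for
  the eigenvalue at position \<open>c\<close> nonzero at every index \<open>\<preceq> c\<close>.

  Since \<open>df\<^sub>i\<^sub>,\<^sub>j(X)(E\<^sub>b\<^sub>a) = j (X\<^sub>i\<^sup>j\<^sup>-\<^sup>1)\<^sub>a\<^sub>b\<close> vanishes when \<open>a\<close> or \<open>b\<close> is at least \<open>i\<close>, a
  linear relation among the differentials yields, at its top level \<open>i\<close>, a polynomial \<open>p\<close> of
  degree \<open>< i\<close> such that \<open>p(X\<^sub>i)\<close> vanishes on the last row and column. Pairing with right
  eigenvectors (for eigenvalues at indices \<open>\<succeq> i - 1\<close>) or left eigenvectors (the others) shows that
  \<open>p\<close> vanishes at all \<open>i\<close> eigenvalues, so \<open>p = 0\<close>; downward induction on \<open>i\<close> finishes.\<close>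

section \<open>Matrix units and Lie subalgebras\<close>

lemma index_mult_mat_sum:
  assumes "A \<in> carrier_mat n k" "B \<in> carrier_mat k m" "a < n" "b < m"
  shows "(A * B) $$ (a, b) = (\<Sum>c<k. A $$ (a, c) * B $$ (c, b))"
  using assms by (auto simp: scalar_prod_def atLeast0LessThan intro!: sum.cong)

definition mat_unit :: "nat \<Rightarrow> nat \<Rightarrow> nat \<Rightarrow> complex mat" where
  "mat_unit N a b = mat N N (\<lambda>(i, j). if i = a \<and> j = b then 1 else 0)"

lemma mat_unit_carrier [simp]: "mat_unit N a b \<in> carrier_mat N N"
  and dim_mat_unit [simp]: "dim_row (mat_unit N a b) = N" "dim_col (mat_unit N a b) = N"
  by (simp_all add: mat_unit_def)

lemma index_mat_unit [simp]:
  "i < N \<Longrightarrow> j < N \<Longrightarrow> mat_unit N a b $$ (i, j) = (if i = a \<and> j = b then 1 else 0)"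
  by (simp add: mat_unit_def)

lemma index_mat_unit_mult:
  assumes "M \<in> carrier_mat N N" "b < N" "i < N" "j < N"
  shows "(mat_unit N a b * M) $$ (i, j) = (if i = a then M $$ (b, j) else 0)"
  using assms by (subst index_mult_mat_sum[of _ N N _ N]) (auto simp: if_distrib if_distribR cong: if_cong)

lemma index_mult_mat_unit:
  assumes "M \<in> carrier_mat N N" "a < N" "i < N" "j < N"
  shows "(M * mat_unit N a b) $$ (i, j) = (if j = b then M $$ (i, a) else 0)"
  using assms by (subst index_mult_mat_sum[of _ N N _ N]) (auto simp: if_distrib if_distribR cong: if_cong)

lemma dim_lie_bracket [simp]:
  "dim_row (lie_bracket A B) = dim_row B" "dim_col (lie_bracket A B) = dim_col A"
  by (simp_all add: lie_bracket_def)

lemma lie_bracket_carrier [simp]: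
  "A \<in> carrier_mat N N \<Longrightarrow> B \<in> carrier_mat N N \<Longrightarrow> lie_bracket A B \<in> carrier_mat N N"
  by (simp add: lie_bracket_def minus_carrier_mat)

lemma index_lie_bracket:
  assumes "A \<in> carrier_mat N N" "B \<in> carrier_mat N N" "i < N" "j < N"
  shows "lie_bracket A B $$ (i, j) = (A * B) $$ (i, j) - (B * A) $$ (i, j)"
  using assms by (simp add: lie_bracket_def)

lemma index_lie_bracket_mat_unit_diag:
  assumes "M \<in> carrier_mat N N" "a < N" "i < N" "j < N"
  shows "lie_bracket (mat_unit N a a) M $$ (i, j) =
    (if i = a then M $$ (a, j) else 0) - (if j = a then M $$ (i, a) else 0)"
  using assms by (simp add: index_lie_bracket[of _ N] index_mat_unit_mult index_mult_mat_unit
      del: index_mult_mat)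

lemma lie_bracket_mat_unit_mat_unit:
  assumes "a < N" "b < N" "c < N" "d < N"
  shows "lie_bracket (mat_unit N a b) (mat_unit N c d) =
    (if b = c then mat_unit N a d else 0\<^sub>m N N) - (if d = a then mat_unit N c b else 0\<^sub>m N N)"
  by (rule eq_matI) (use assms in \<open>auto simp: index_lie_bracket[of _ N] index_mat_unit_mult
      simp del: index_mult_mat\<close>)

lemma lie_subalgebraD:
  assumes "lie_subalgebra N L"
  shows "L \<subseteq> carrier_mat N N" and "x \<in> L \<Longrightarrow> y \<in> L \<Longrightarrow> x + y \<in> L"
    and "x \<in> L \<Longrightarrow> t \<cdot>\<^sub>m x \<in> L" and "x \<in> L \<Longrightarrow> y \<in> L \<Longrightarrow> lie_bracket x y \<in> L"
  using assms by (auto simp: lie_subalgebra_def)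

lemma mat_unit_mem_if_index_nonzero:
  assumes L: "lie_subalgebra N L" and cartan: "diagonal_cartan N \<subseteq> L" and x: "x \<in> L"
    and ab: "a < N" "b < N" "a \<noteq> b" "x $$ (a, b) \<noteq> 0"
  shows "mat_unit N a b \<in> L"
proof -
  have units: "mat_unit N a a \<in> L" "mat_unit N b b \<in> L"
    using cartan ab by (auto simp: diagonal_cartan_def)
  have x_carrier: "x \<in> carrier_mat N N" using lie_subalgebraD(1)[OF L] x by blast
  define z where "z = lie_bracket (mat_unit N b b) (lie_bracket (mat_unit N a a) x)"
  define w where "w = lie_bracket (mat_unit N a a) z"
  have "z \<in> L" "w \<in> L" unfolding z_def w_def using units x by (simp_all add: lie_subalgebraD(4)[OF L])
  \<comment> \<open>\<open>z = - x\<^sub>a\<^sub>b E\<^sub>a\<^sub>b - x\<^sub>b\<^sub>a E\<^sub>b\<^sub>a\<close> and \<open>w = [E\<^sub>a\<^sub>a, z]\<close> flips the sign of the second summand.\<close>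
  moreover have "mat_unit N a b = (- 1 / (2 * x $$ (a, b))) \<cdot>\<^sub>m (z + w)"
    by (rule eq_matI) (use ab x_carrier in \<open>auto simp: z_def w_def index_lie_bracket_mat_unit_diag\<close>)
  ultimately show ?thesis using lie_subalgebraD(2,3)[OF L] by metis
qed

lemma smult_lie_bracket_mem_derived_series:
  assumes "x \<in> derived_series N L k" "y \<in> derived_series N L k"
    and "x \<in> carrier_mat N N" "y \<in> carrier_mat N N"
  shows "t \<cdot>\<^sub>m lie_bracket x y \<in> derived_series N L (Suc k)"
proof -
  have "t \<cdot>\<^sub>m lie_bracket x y = mat_lincomb N (\<lambda>_. t) (\<lambda>_. lie_bracket x y) 1"
    using assms by simp
  then show ?thesis using assms unfolding derived_series.simps mat_span_def by blast
qed

lemma solvable_lie_not_mat_unit_pair: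
  assumes L: "lie_subalgebra N L" and solvable: "solvable_lie N L"
    and ab: "a < N" "b < N" "a \<noteq> b"
  shows "\<not> (mat_unit N a b \<in> L \<and> mat_unit N b a \<in> L)"
proof
  assume units: "mat_unit N a b \<in> L \<and> mat_unit N b a \<in> L"
  define h where "h = mat_unit N a a - mat_unit N b b"
  have h_carrier: "h \<in> carrier_mat N N" by (simp add: h_def minus_carrier_mat)
  have h_eq: "h = 1 \<cdot>\<^sub>m lie_bracket (mat_unit N a b) (mat_unit N b a)"
    by (rule eq_matI) (use ab h_carrier in \<open>auto simp: h_def lie_bracket_mat_unit_mat_unit\<close>)
  have ab_eq: "mat_unit N a b = (1 / 2) \<cdot>\<^sub>m lie_bracket h (mat_unit N a b)"
    by (rule eq_matI) (use ab h_carrier in \<open>auto simp: index_lie_bracket[of _ N]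
      index_mult_mat_unit index_mat_unit_mult h_def simp del: index_mult_mat\<close>)
  have ba_eq: "mat_unit N b a = (- 1 / 2) \<cdot>\<^sub>m lie_bracket h (mat_unit N b a)"
    by (rule eq_matI) (use ab h_carrier in \<open>auto simp: index_lie_bracket[of _ N]
      index_mult_mat_unit index_mat_unit_mult h_def simp del: index_mult_mat\<close>)
  \<comment> \<open>the span of \<open>E\<^sub>a\<^sub>b, E\<^sub>b\<^sub>a, h\<close> is a copy of \<open>sl\<^sub>2\<close>, which is perfect\<close>
  have "mat_unit N a b \<in> derived_series N L k \<and> mat_unit N b a \<in> derived_series N L k
      \<and> h \<in> derived_series N L k" for k
  proof (induction k)
    case 0
    then show ?case
      using units h_eq lie_subalgebraD(3,4)[OF L] by (metis derived_series.simps(1))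
  next
    case (Suc k)
    then show ?case
      using smult_lie_bracket_mem_derived_series[of _ N L k] h_carrier h_eq ab_eq ba_eq
      by (metis mat_unit_carrier)
  qed
  moreover obtain k where "derived_series N L k = {0\<^sub>m N N}"
    using solvable by (auto simp: solvable_lie_def)
  ultimately have "mat_unit N a b = 0\<^sub>m N N" by blast
  then show False using ab index_mat_unit[of a N b a b] by simp
qed

section \<open>Pattern algebras are solvable\<close>

lemma mat_span_subset:
  assumes "S \<subseteq> W" and "0\<^sub>m N N \<in> W"
    and "\<And>x y. x \<in> W \<Longrightarrow> y \<in> W \<Longrightarrow> x + y \<in> W" and "\<And>t x. x \<in> W \<Longrightarrow> t \<cdot>\<^sub>m x \<in> W"
  shows "mat_span N S \<subseteq> W"
proof -
  have "(\<forall>k<m. A k \<in> S) \<Longrightarrow> mat_lincomb N c A m \<in> W" for c A m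
    by (induction m) (use assms in auto)
  then show ?thesis unfolding mat_span_def by blast
qed

definition pattern_algebra :: "nat \<Rightarrow> (nat \<times> nat) set \<Rightarrow> complex mat set" where
  "pattern_algebra N R = {x \<in> carrier_mat N N. \<forall>a<N. \<forall>b<N. a \<noteq> b \<and> (a, b) \<notin> R \<longrightarrow> x $$ (a, b) = 0}"

definition order_rank :: "nat \<Rightarrow> (nat \<times> nat) set \<Rightarrow> nat \<Rightarrow> nat" where
  "order_rank N R a = card {c. c < N \<and> (c, a) \<in> R}"

definition rank_filtration :: "nat \<Rightarrow> (nat \<times> nat) set \<Rightarrow> nat \<Rightarrow> complex mat set" where
  "rank_filtration N R k = {x \<in> carrier_mat N N. \<forall>a<N. \<forall>b<N. x $$ (a, b) \<noteq> 0 \<longrightarrow>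
      (a = b \<or> (a, b) \<in> R) \<and> order_rank N R a + k \<le> order_rank N R b}"

lemma rank_filtration_antimono:
  assumes "k \<le> l"
  shows "rank_filtration N R l \<subseteq> rank_filtration N R k"
proof -
  have "order_rank N R a + k \<le> order_rank N R b" if "order_rank N R a + l \<le> order_rank N R b" for a b
    using assms that by linarith
  then show ?thesis unfolding rank_filtration_def by blast
qed

lemma rank_filtration_support:
  assumes "x \<in> rank_filtration N R k" "y \<in> rank_filtration N R k" "z \<in> carrier_mat N N"
    and "\<And>a b. a < N \<Longrightarrow> b < N \<Longrightarrow> z $$ (a, b) \<noteq> 0 \<Longrightarrow> x $$ (a, b) \<noteq> 0 \<or> y $$ (a, b) \<noteq> 0"
  shows "z \<in> rank_filtration N R k"
proof -
  have "(a = b \<or> (a, b) \<in> R) \<and> order_rank N R a + k \<le> order_rank N R b"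
    if "a < N" "b < N" "z $$ (a, b) \<noteq> 0" for a b
    using assms(4)[OF that] assms(1,2) that unfolding rank_filtration_def by blast
  then show ?thesis using assms(3) unfolding rank_filtration_def by blast
qed

lemma rank_filtration_zero: "0\<^sub>m N N \<in> rank_filtration N R k"
  by (simp add: rank_filtration_def)

lemma rank_filtration_add:
  "x \<in> rank_filtration N R k \<Longrightarrow> y \<in> rank_filtration N R k \<Longrightarrow> x + y \<in> rank_filtration N R k"
  by (rule rank_filtration_support[of x _ _ _ y]) (auto simp: rank_filtration_def)

lemma rank_filtration_minus:
  "x \<in> rank_filtration N R k \<Longrightarrow> y \<in> rank_filtration N R k \<Longrightarrow> x - y \<in> rank_filtration N R k"
  by (rule rank_filtration_support[of x _ _ _ y]) (auto simp: rank_filtration_def minus_carrier_mat)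

lemma rank_filtration_smult: "x \<in> rank_filtration N R k \<Longrightarrow> t \<cdot>\<^sub>m x \<in> rank_filtration N R k"
  by (rule rank_filtration_support[of x _ _ _ x]) (auto simp: rank_filtration_def)

context
  fixes R :: "(nat \<times> nat) set"
  assumes trans: "trans R" and irrefl: "irrefl R"
begin

lemma order_rank_less:
  assumes "(a, b) \<in> R" "a < N"
  shows "order_rank N R a < order_rank N R b"
proof -
  have "{c. c < N \<and> (c, a) \<in> R} \<subset> {c. c < N \<and> (c, b) \<in> R}"
    using assms trans irrefl unfolding trans_def irrefl_def by blast
  then show ?thesis unfolding order_rank_def by (rule psubset_card_mono[rotated]) simp
qed

lemma order_rank_less_bound:
  assumes "b < N"
  shows "order_rank N R b < N"
proof -
  have "{c. c < N \<and> (c, b) \<in> R} \<subseteq> {..<N} - {b}" using irrefl by (auto simp: irrefl_def)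
  then have "order_rank N R b \<le> card ({..<N} - {b})"
    unfolding order_rank_def by (rule card_mono[rotated]) simp
  then show ?thesis using assms by simp
qed

lemma rank_filtration_0: "rank_filtration N R 0 = pattern_algebra N R"
  using order_rank_less unfolding rank_filtration_def pattern_algebra_def by fastforce

lemma rank_filtration_mult:
  assumes x: "x \<in> rank_filtration N R k" and y: "y \<in> rank_filtration N R l"
  shows "x * y \<in> rank_filtration N R (k + l)"
proof -
  have carrier: "x \<in> carrier_mat N N" "y \<in> carrier_mat N N"
    using x y by (auto simp: rank_filtration_def)
  have "(a = b \<or> (a, b) \<in> R) \<and> order_rank N R a + (k + l) \<le> order_rank N R b"
    if ab: "a < N" "b < N" "(x * y) $$ (a, b) \<noteq> 0" for a b
  proof -
    have "(\<Sum>c<N. x $$ (a, c) * y $$ (c, b)) \<noteq> 0"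
      using ab(3) unfolding index_mult_mat_sum[OF carrier ab(1,2)] .
    then obtain c where c: "c < N" "x $$ (a, c) \<noteq> 0" "y $$ (c, b) \<noteq> 0"
      by (auto elim: sum.not_neutral_contains_not_neutral)
    have ac: "(a = c \<or> (a, c) \<in> R) \<and> order_rank N R a + k \<le> order_rank N R c"
      using x ab(1) c(1,2) unfolding rank_filtration_def by blast
    have cb: "(c = b \<or> (c, b) \<in> R) \<and> order_rank N R c + l \<le> order_rank N R b"
      using y ab(2) c(1,3) unfolding rank_filtration_def by blast
    have "a = b \<or> (a, b) \<in> R" using ac cb trans by (metis transD)
    moreover have "order_rank N R a + (k + l) \<le> order_rank N R b" using ac cb by linarith
    ultimately show ?thesis ..
  qed
  moreover have "x * y \<in> carrier_mat N N" using carrier by simp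
  ultimately show ?thesis unfolding rank_filtration_def by blast
qed

lemma index_mult_diag_rank_filtration_0:
  assumes x: "x \<in> rank_filtration N R 0" and y: "y \<in> rank_filtration N R 0" and a: "a < N"
  shows "(x * y) $$ (a, a) = x $$ (a, a) * y $$ (a, a)"
proof -
  have carrier: "x \<in> carrier_mat N N" "y \<in> carrier_mat N N"
    using x y by (auto simp: rank_filtration_def)
  have off_diag: "x $$ (a, c) * y $$ (c, a) = 0" if c: "c \<in> {..<N} - {a}" for c
  proof (rule ccontr)
    assume "x $$ (a, c) * y $$ (c, a) \<noteq> 0"
    then have "(a, c) \<in> R" "(c, a) \<in> R" using x y a c by (auto simp: rank_filtration_def)
    then show False using trans irrefl by (auto simp: irrefl_def dest: transD)
  qed
  have "(x * y) $$ (a, a) = x $$ (a, a) * y $$ (a, a) + (\<Sum>c\<in>{..<N} - {a}. x $$ (a, c) * y $$ (c, a))"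
    using index_mult_mat_sum[OF carrier a a] sum.remove[of "{..<N}" a] a by simp
  then show ?thesis using off_diag by simp
qed

lemma lie_bracket_rank_filtration_0:
  assumes x: "x \<in> rank_filtration N R 0" and y: "y \<in> rank_filtration N R 0"
  shows "lie_bracket x y \<in> rank_filtration N R 1"
proof -
  have carrier: "x \<in> carrier_mat N N" "y \<in> carrier_mat N N"
    using x y by (auto simp: rank_filtration_def)
  have products: "x * y \<in> rank_filtration N R 0" "y * x \<in> rank_filtration N R 0"
    using rank_filtration_mult[OF x y] rank_filtration_mult[OF y x] by simp_all
  have "(a = b \<or> (a, b) \<in> R) \<and> order_rank N R a + 1 \<le> order_rank N R b"
    if ab: "a < N" "b < N" "lie_bracket x y $$ (a, b) \<noteq> 0" for a b
  proof -
    have diag: "lie_bracket x y $$ (c, c) = 0" if "c < N" for c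
      unfolding index_lie_bracket[OF carrier that that]
        index_mult_diag_rank_filtration_0[OF x y that] index_mult_diag_rank_filtration_0[OF y x that]
      by simp
    have "(x * y) $$ (a, b) \<noteq> 0 \<or> (y * x) $$ (a, b) \<noteq> 0"
      using ab(3) unfolding index_lie_bracket[OF carrier ab(1,2)] by auto
    then have "a = b \<or> (a, b) \<in> R"
      using products ab(1,2) unfolding rank_filtration_def by blast
    moreover have "a \<noteq> b" using diag ab by blast
    ultimately show ?thesis using order_rank_less[of a b N] ab(1) by auto
  qed
  moreover have "lie_bracket x y \<in> carrier_mat N N" using carrier by simp
  ultimately show ?thesis unfolding rank_filtration_def by blast
qed

lemma lie_bracket_rank_filtration:
  assumes x: "x \<in> rank_filtration N R k" and y: "y \<in> rank_filtration N R k"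
  shows "lie_bracket x y \<in> rank_filtration N R (Suc k)"
proof (cases k)
  case 0
  then show ?thesis using lie_bracket_rank_filtration_0 x y by simp
next
  case (Suc k')
  have "lie_bracket x y \<in> rank_filtration N R (k + k)"
    unfolding lie_bracket_def by (intro rank_filtration_minus rank_filtration_mult x y)
  then show ?thesis using rank_filtration_antimono[of "Suc k" "k + k"] Suc by auto
qed

lemma derived_series_pattern_algebra:
  "derived_series N (pattern_algebra N R) k \<subseteq> rank_filtration N R k"
proof (induction k)
  case 0
  then show ?case using rank_filtration_0 by simp
next
  case (Suc k)
  then show ?case
    unfolding derived_series.simps
    by (intro mat_span_subset) (auto intro: lie_bracket_rank_filtration rank_filtration_zero
        rank_filtration_add rank_filtration_smult)
qed

lemma rank_filtration_vanishes: "rank_filtration N R N \<subseteq> {0\<^sub>m N N}"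
proof
  fix x assume x: "x \<in> rank_filtration N R N"
  have "x $$ (a, b) = 0" if "a < N" "b < N" for a b
    using x that order_rank_less_bound[of b N] by (force simp: rank_filtration_def)
  then show "x \<in> {0\<^sub>m N N}" using x by (auto simp: rank_filtration_def intro!: eq_matI)
qed

lemma pattern_algebra_solvable: "solvable_lie N (pattern_algebra N R)"
proof -
  have "0\<^sub>m N N \<in> derived_series N (pattern_algebra N R) (Suc N)"
    unfolding derived_series.simps mat_span_def
    by (intro CollectI exI[of _ "\<lambda>_. 0"] exI[of _ "\<lambda>_. 0\<^sub>m N N"] exI[of _ 0]) simp
  moreover have "derived_series N (pattern_algebra N R) (Suc N) \<subseteq> {0\<^sub>m N N}"
    using derived_series_pattern_algebra[of N "Suc N"] rank_filtration_antimono[OF le_SucI[OF le_refl]]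
      rank_filtration_vanishes[of N]
    by blast
  ultimately show ?thesis unfolding solvable_lie_def by blast
qed

lemma pattern_algebra_lie_subalgebra: "lie_subalgebra N (pattern_algebra N R)"
proof -
  have "lie_bracket x y \<in> rank_filtration N R 0"
    if "x \<in> rank_filtration N R 0" "y \<in> rank_filtration N R 0" for x y
    using lie_bracket_rank_filtration_0[OF that] rank_filtration_antimono[of 0 1 N R] by blast
  moreover have "rank_filtration N R 0 \<subseteq> carrier_mat N N" by (auto simp: rank_filtration_def)
  ultimately show ?thesis
    unfolding lie_subalgebra_def rank_filtration_0[symmetric]
    by (simp add: rank_filtration_zero rank_filtration_add rank_filtration_smult)
qed

end

section \<open>Borel subalgebras containing the diagonal\<close>

lemma mat_unit_mem_pattern_algebra:
  "a < N \<Longrightarrow> b < N \<Longrightarrow> (a, b) \<in> R \<Longrightarrow> mat_unit N a b \<in> pattern_algebra N R"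
  by (simp add: pattern_algebra_def)

lemma trans_irrefl_adjoin_pair:
  assumes "trans S" "irrefl S" "(b, a) \<notin> S" "a \<noteq> b"
  shows "trans (S \<union> S\<^sup>= O {(a, b)} O S\<^sup>=)" and "irrefl (S \<union> S\<^sup>= O {(a, b)} O S\<^sup>=)"
  using assms unfolding trans_def irrefl_def by blast+

lemma borel_subalgebra_eq_pattern_algebra:
  assumes borel: "borel_subalgebra N B" and cartan: "diagonal_cartan N \<subseteq> B"
  defines "S \<equiv> {(a, b). a < N \<and> b < N \<and> a \<noteq> b \<and> mat_unit N a b \<in> B}"
  shows "strict_linear_order_on {..<N} S" and "B = pattern_algebra N S"
proof -
  have L: "lie_subalgebra N B" and solvable: "solvable_lie N B"
    and maximal: "\<And>B'. lie_subalgebra N B' \<Longrightarrow> solvable_lie N B' \<Longrightarrow> B \<subseteq> B' \<Longrightarrow> B' = B"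
    using borel by (auto simp: borel_subalgebra_def)
  have irrefl: "irrefl S" by (auto simp: S_def irrefl_def)
  have asym: "(b, a) \<notin> S" if "(a, b) \<in> S" for a b
    using that solvable_lie_not_mat_unit_pair[OF L solvable] by (auto simp: S_def)
  have trans: "trans S"
  proof
    fix a b c assume ab: "(a, b) \<in> S" and bc: "(b, c) \<in> S"
    then have "a \<noteq> c" using asym by blast
    moreover have "mat_unit N a c = lie_bracket (mat_unit N a b) (mat_unit N b c)"
      by (rule eq_matI) (use ab bc \<open>a \<noteq> c\<close> in \<open>auto simp: S_def lie_bracket_mat_unit_mat_unit\<close>)
    ultimately show "(a, c) \<in> S"
      using ab bc lie_subalgebraD(4)[OF L] by (simp add: S_def)
  qed
  have B_sub: "B \<subseteq> pattern_algebra N S"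
  proof
    fix x assume x: "x \<in> B"
    have "x $$ (a, b) = 0" if "a < N" "b < N" "a \<noteq> b" "(a, b) \<notin> S" for a b
      using mat_unit_mem_if_index_nonzero[OF L cartan x that(1-3)] that by (auto simp: S_def)
    moreover have "x \<in> carrier_mat N N" using x lie_subalgebraD(1)[OF L] by blast
    ultimately show "x \<in> pattern_algebra N S" by (simp add: pattern_algebra_def)
  qed
  have pattern_eq: "pattern_algebra N R = B" if "trans R" "irrefl R" "S \<subseteq> R" for R
  proof (rule maximal)
    show "lie_subalgebra N (pattern_algebra N R)" "solvable_lie N (pattern_algebra N R)"
      using pattern_algebra_lie_subalgebra pattern_algebra_solvable that(1,2) by blast+
    have "pattern_algebra N S \<subseteq> pattern_algebra N R"
      using that(3) by (auto simp: pattern_algebra_def)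
    then show "B \<subseteq> pattern_algebra N R" using B_sub by blast
  qed
  have "total_on {..<N} S"
  proof
    fix a b assume ab: "a \<in> {..<N}" "b \<in> {..<N}" "a \<noteq> b"
    show "(a, b) \<in> S \<or> (b, a) \<in> S"
    proof (rule ccontr)
      assume neither: "\<not> ((a, b) \<in> S \<or> (b, a) \<in> S)"
      let ?R = "S \<union> S\<^sup>= O {(a, b)} O S\<^sup>="
      have "pattern_algebra N ?R = B"
        using trans_irrefl_adjoin_pair[OF trans irrefl] neither ab by (intro pattern_eq) auto
      then have "mat_unit N a b \<in> B"
        using mat_unit_mem_pattern_algebra[of a N b ?R] ab by blast
      then show False using neither ab by (simp add: S_def)
    qed
  qed
  then show "strict_linear_order_on {..<N} S"
    using trans irrefl by (simp add: strict_linear_order_on_def)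
  show "B = pattern_algebra N S" using pattern_eq[OF trans irrefl] by simp
qed

lemma order_rank_less_iff:
  assumes R: "strict_linear_order_on {..<N} R" and ab: "a < N" "b < N" "a \<noteq> b"
  shows "(a, b) \<in> R \<longleftrightarrow> order_rank N R a < order_rank N R b"
proof -
  have "trans R" "irrefl R" and "(a, b) \<in> R \<or> (b, a) \<in> R"
    using R ab by (auto simp: strict_linear_order_on_def total_on_def)
  then show ?thesis using order_rank_less[of R a b N] order_rank_less[of R b a N] ab by auto
qed

lemma inj_on_order_rank:
  assumes "strict_linear_order_on {..<N} R"
  shows "inj_on (order_rank N R) {..<N}"
proof (rule inj_onI, rule ccontr)
  fix a b assume "a \<in> {..<N}" "b \<in> {..<N}" "order_rank N R a = order_rank N R b" "a \<noteq> b"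
  then show False
    using order_rank_less_iff[OF assms, of a b] order_rank_less_iff[OF assms, of b a]
      assms by (auto simp: strict_linear_order_on_def total_on_def)
qed

section \<open>Eigenvectors and powers of \<open>upper_ones_mat\<close>\<close>

lemma index_mult_mat_vec_sum:
  assumes "A \<in> carrier_mat n k" "v \<in> carrier_vec k" "a < n"
  shows "(A *\<^sub>v v) $ a = (\<Sum>b<k. A $$ (a, b) * v $ b)"
  using assms by (auto simp: scalar_prod_def atLeast0LessThan intro!: sum.cong)

lemma pow_mat_commute:
  assumes "A \<in> carrier_mat n n"
  shows "A * A ^\<^sub>m k = A ^\<^sub>m k * A"
proof (induction k)
  case 0
  then show ?case using assms by simp
next
  case (Suc k)
  have "A * A ^\<^sub>m Suc k = (A * A ^\<^sub>m k) * A"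
    using assms by (simp add: assoc_mult_mat[of _ n n _ n _ n])
  then show ?case using Suc by simp
qed

lemma transpose_pow_mat:
  assumes "(A :: 'a :: comm_semiring_1 mat) \<in> carrier_mat n n"
  shows "transpose_mat (A ^\<^sub>m k) = transpose_mat A ^\<^sub>m k"
proof (induction k)
  case 0
  then show ?case using assms by simp
next
  case (Suc k)
  have "transpose_mat (A ^\<^sub>m Suc k) = transpose_mat (A * A ^\<^sub>m k)"
    using pow_mat_commute[OF assms] by simp
  also have "\<dots> = transpose_mat (A ^\<^sub>m k) * transpose_mat A"
    using assms by (simp add: transpose_mult[of _ n n _ n])
  finally show ?case using Suc by simp
qed

lemma pow_mat_mult_eigenvector:
  fixes A :: "'a :: field mat"
  assumes A: "A \<in> carrier_mat n n" and v: "v \<in> carrier_vec n" and eigen: "A *\<^sub>v v = l \<cdot>\<^sub>v v"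
  shows "A ^\<^sub>m k *\<^sub>v v = l ^ k \<cdot>\<^sub>v v"
proof (induction k)
  case 0
  then show ?case using A v by simp
next
  case (Suc k)
  have "A ^\<^sub>m Suc k *\<^sub>v v = A ^\<^sub>m k *\<^sub>v (l \<cdot>\<^sub>v v)"
    using A v eigen by (simp add: assoc_mult_mat_vec[of _ n n _ n])
  also have "\<dots> = l \<cdot>\<^sub>v (l ^ k \<cdot>\<^sub>v v)"
    using A v Suc by (simp add: mult_mat_vec[of _ n n])
  finally show ?case by (simp add: smult_smult_assoc mult.commute)
qed

lemma sum_prod_above_telescope:
  fixes \<kappa> :: "'b \<Rightarrow> 'c :: linorder" and \<rho> :: "'b \<Rightarrow> 'a :: comm_ring_1"
  assumes "finite J" "inj_on \<kappa> J"
  shows "(\<Sum>e\<in>J. (\<rho> e - 1) * (\<Prod>d\<in>{d\<in>J. \<kappa> e < \<kappa> d}. \<rho> d)) = (\<Prod>d\<in>J. \<rho> d) - 1"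
  using assms
proof (induction J rule: finite_ranking_induct[where f = \<kappa>])
  case empty
  then show ?case by simp
next
  case (insert x J)
  show ?case
  proof (cases "x \<in> J")
    case True
    then show ?thesis using insert by (simp add: insert_absorb)
  next
    case False
    have inj: "inj_on \<kappa> J" using insert(4) by (simp add: inj_on_insert)
    have below: "\<kappa> y < \<kappa> x" if y: "y \<in> J" for y
    proof -
      have "\<kappa> y \<noteq> \<kappa> x"
        using inj_onD[OF insert(4), of y x] y False by auto
      then show ?thesis using insert(2)[OF y] by simp
    qed
    have above_x: "{d \<in> insert x J. \<kappa> x < \<kappa> d} = {}" using below by force
    have above: "{d \<in> insert x J. \<kappa> e < \<kappa> d} = insert x {d \<in> J. \<kappa> e < \<kappa> d}" if "e \<in> J" for e
      using below[OF that] by auto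
    have "(\<Sum>e\<in>insert x J. (\<rho> e - 1) * (\<Prod>d\<in>{d\<in>insert x J. \<kappa> e < \<kappa> d}. \<rho> d))
        = (\<rho> x - 1) + (\<Sum>e\<in>J. (\<rho> e - 1) * (\<Prod>d\<in>{d\<in>insert x J. \<kappa> e < \<kappa> d}. \<rho> d))"
      unfolding sum.insert[OF insert(1) False] above_x by simp
    also have "(\<Sum>e\<in>J. (\<rho> e - 1) * (\<Prod>d\<in>{d\<in>insert x J. \<kappa> e < \<kappa> d}. \<rho> d))
        = (\<Sum>e\<in>J. \<rho> x * ((\<rho> e - 1) * (\<Prod>d\<in>{d\<in>J. \<kappa> e < \<kappa> d}. \<rho> d)))"
    proof (rule sum.cong)
      fix e assume e: "e \<in> J"
      have "finite {d \<in> J. \<kappa> e < \<kappa> d}" "x \<notin> {d \<in> J. \<kappa> e < \<kappa> d}"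
        using insert(1) False by simp_all
      then show "(\<rho> e - 1) * (\<Prod>d\<in>{d\<in>insert x J. \<kappa> e < \<kappa> d}. \<rho> d)
          = \<rho> x * ((\<rho> e - 1) * (\<Prod>d\<in>{d\<in>J. \<kappa> e < \<kappa> d}. \<rho> d))"
        unfolding above[OF e] by simp
    qed simp
    also have "\<dots> = \<rho> x * ((\<Prod>d\<in>J. \<rho> d) - 1)"
      using insert(3)[OF inj] by (simp add: sum_distrib_left[symmetric])
    finally show ?thesis using False insert(1) by (simp add: algebra_simps)
  qed
qed

definition upper_ones_mat :: "nat \<Rightarrow> (nat \<Rightarrow> int) \<Rightarrow> (nat \<Rightarrow> complex) \<Rightarrow> complex mat" where
  "upper_ones_mat n \<kappa> \<mu> = mat n n (\<lambda>(a, b). if a = b then \<mu> a else if \<kappa> a < \<kappa> b then 1 else 0)"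

lemma upper_ones_mat_carrier [simp]: "upper_ones_mat n \<kappa> \<mu> \<in> carrier_mat n n"
  and dim_upper_ones_mat [simp]: "dim_row (upper_ones_mat n \<kappa> \<mu>) = n" "dim_col (upper_ones_mat n \<kappa> \<mu>) = n"
  by (simp_all add: upper_ones_mat_def)

lemma index_upper_ones_mat [simp]:
  "a < n \<Longrightarrow> b < n \<Longrightarrow>
    upper_ones_mat n \<kappa> \<mu> $$ (a, b) = (if a = b then \<mu> a else if \<kappa> a < \<kappa> b then 1 else 0)"
  by (simp add: upper_ones_mat_def)

lemma transpose_upper_ones_mat:
  "transpose_mat (upper_ones_mat n \<kappa> \<mu>) = upper_ones_mat n (\<lambda>a. - \<kappa> a) \<mu>"
  by (rule eq_matI) auto

lemma upper_left_upper_ones_mat: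
  "i \<le> N \<Longrightarrow> upper_left i (upper_ones_mat N \<kappa> \<mu>) = upper_ones_mat i \<kappa> \<mu>"
  by (rule eq_matI) (auto simp: upper_left_def)

text \<open>The eigenvector for \<open>\<mu> c\<close> comes from back substitution along \<open>\<kappa>\<close>: the partial sums
  \<open>\<Sum>\<^bsub>\<kappa> a \<le> \<kappa> b \<le> \<kappa> c\<^esub> v b\<close> get multiplied by \<open>\<rho> a = 1 + 1 / (\<mu> c - \<mu> a)\<close> at each step,
  which is why the eigenvalues must not differ by \<open>1\<close>.\<close>

lemma upper_ones_mat_eigenvector:
  assumes inj: "inj_on \<kappa> {..<n}" and c: "c < n"
    and sep: "\<And>d. d < n \<Longrightarrow> d \<noteq> c \<Longrightarrow> \<mu> c - \<mu> d \<noteq> 0 \<and> \<mu> c - \<mu> d + 1 \<noteq> 0"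
  obtains v :: "complex vec" where "v \<in> carrier_vec n" and "upper_ones_mat n \<kappa> \<mu> *\<^sub>v v = \<mu> c \<cdot>\<^sub>v v"
    and "\<And>a. a < n \<Longrightarrow> \<kappa> a \<le> \<kappa> c \<Longrightarrow> v $ a \<noteq> 0"
proof -
  define \<rho> where "\<rho> d = 1 + 1 / (\<mu> c - \<mu> d)" for d
  define J where "J a = {d. d < n \<and> \<kappa> a < \<kappa> d \<and> \<kappa> d < \<kappa> c}" for a
  define w where "w a = (if a = c then 1 else if \<kappa> a < \<kappa> c then (\<Prod>d\<in>J a. \<rho> d) / (\<mu> c - \<mu> a) else 0)"
    for a
  have J_finite: "finite (J a)" for a unfolding J_def by simp
  have \<kappa>_eq: "a = b" if "a < n" "b < n" "\<kappa> a = \<kappa> b" for a b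
    using inj that by (auto dest: inj_onD)
  have gap: "\<mu> c - \<mu> d \<noteq> 0" if "d < n" "d \<noteq> c" for d
    using sep[OF that] by simp
  have \<rho>_nonzero: "\<rho> d \<noteq> 0" if "d < n" "d \<noteq> c" for d
  proof -
    have "\<rho> d = (\<mu> c - \<mu> d + 1) / (\<mu> c - \<mu> d)"
      using gap[OF that] by (simp add: \<rho>_def add_divide_distrib)
    then show ?thesis using sep[OF that] by simp
  qed
  have row: "(upper_ones_mat n \<kappa> \<mu> *\<^sub>v vec n w) $ a = \<mu> a * w a + (\<Sum>b\<in>{b. b < n \<and> \<kappa> a < \<kappa> b}. w b)"
    if a: "a < n" for a
  proof -
    have "(upper_ones_mat n \<kappa> \<mu> *\<^sub>v vec n w) $ a
        = (\<Sum>b<n. (if b = a then \<mu> a * w a else 0) + (if \<kappa> a < \<kappa> b then w b else 0))"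
      using a by (subst index_mult_mat_vec_sum[of _ n n]) (auto intro!: sum.cong)
    also have "\<dots> = \<mu> a * w a + (\<Sum>b\<in>{b. b < n \<and> \<kappa> a < \<kappa> b}. w b)"
      using a by (simp add: sum.distrib sum.If_cases lessThan_def Collect_conj_eq Int_commute)
    finally show ?thesis .
  qed
  have eigen: "\<mu> a * w a + (\<Sum>b\<in>{b. b < n \<and> \<kappa> a < \<kappa> b}. w b) = \<mu> c * w a" if a: "a < n" for a
  proof (cases "\<kappa> a < \<kappa> c")
    case False
    then have "(\<Sum>b\<in>{b. b < n \<and> \<kappa> a < \<kappa> b}. w b) = 0"
      by (intro sum.neutral) (auto simp: w_def)
    then show ?thesis using False by (simp add: w_def)
  next
    case True
    then have "a \<noteq> c" by auto
    have split: "{b. b < n \<and> \<kappa> a < \<kappa> b} = insert c (J a) \<union> {b. b < n \<and> \<kappa> c < \<kappa> b}"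
      using True \<kappa>_eq c unfolding J_def by force
    have above_c: "(\<Sum>b\<in>{b. b < n \<and> \<kappa> c < \<kappa> b}. w b) = 0"
      by (intro sum.neutral) (auto simp: w_def)
    have "c \<notin> J a" by (simp add: J_def)
    have "(\<Sum>b\<in>{b. b < n \<and> \<kappa> a < \<kappa> b}. w b)
        = (\<Sum>b\<in>insert c (J a). w b) + (\<Sum>b\<in>{b. b < n \<and> \<kappa> c < \<kappa> b}. w b)"
      unfolding split by (rule sum.union_disjoint) (auto simp: J_finite J_def)
    also have "\<dots> = 1 + (\<Sum>b\<in>J a. w b)"
      using above_c by (simp add: sum.insert[OF J_finite \<open>c \<notin> J a\<close>] w_def)
    also have "(\<Sum>b\<in>J a. w b) = (\<Sum>e\<in>J a. (\<rho> e - 1) * (\<Prod>d\<in>{d\<in>J a. \<kappa> e < \<kappa> d}. \<rho> d))"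
    proof (rule sum.cong)
      fix e assume e: "e \<in> J a"
      then have "J e = {d \<in> J a. \<kappa> e < \<kappa> d}" "e \<noteq> c" "\<kappa> e < \<kappa> c"
        using True unfolding J_def by auto
      then show "w e = (\<rho> e - 1) * (\<Prod>d\<in>{d\<in>J a. \<kappa> e < \<kappa> d}. \<rho> d)"
        by (simp add: w_def \<rho>_def)
    qed simp
    also have "\<dots> = (\<Prod>d\<in>J a. \<rho> d) - 1"
      using inj by (intro sum_prod_above_telescope J_finite) (auto simp: J_def intro: inj_on_subset)
    finally show ?thesis using True \<open>a \<noteq> c\<close> gap[OF a \<open>a \<noteq> c\<close>] by (simp add: w_def field_simps)
  qed
  show ?thesis
  proof
    show "vec n w \<in> carrier_vec n" by simp
    show "upper_ones_mat n \<kappa> \<mu> *\<^sub>v vec n w = \<mu> c \<cdot>\<^sub>v vec n w"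
    proof (rule eq_vecI)
      fix a assume "a < dim_vec (\<mu> c \<cdot>\<^sub>v vec n w)"
      then have a: "a < n" by simp
      show "(upper_ones_mat n \<kappa> \<mu> *\<^sub>v vec n w) $ a = (\<mu> c \<cdot>\<^sub>v vec n w) $ a"
        unfolding row[OF a] eigen[OF a] using a by simp
    qed simp
    fix a assume a: "a < n" "\<kappa> a \<le> \<kappa> c"
    show "vec n w $ a \<noteq> 0"
    proof (cases "a = c")
      case False
      then have "\<kappa> a < \<kappa> c" using a \<kappa>_eq[OF a(1) c] by force
      moreover have "(\<Prod>d\<in>J a. \<rho> d) \<noteq> 0"
        using \<rho>_nonzero J_finite unfolding J_def by (auto simp: prod_zero_iff)
      ultimately show ?thesis using a False gap[OF a(1) False] by (simp add: w_def)
    qed (simp add: w_def c)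
  qed
qed

lemma upper_ones_mat_row_root:
  assumes inj: "inj_on \<kappa> {..<n}"
    and sep: "\<forall>c<n. \<forall>d<n. c \<noteq> d \<longrightarrow> \<mu> c - \<mu> d \<noteq> 0 \<and> \<mu> c - \<mu> d + 1 \<noteq> 0"
    and m: "m < n" and e: "e < n" "\<kappa> m \<le> \<kappa> e"
    and row: "\<forall>b<n. (\<Sum>k<n. d k * (upper_ones_mat n \<kappa> \<mu> ^\<^sub>m k) $$ (m, b)) = 0"
  shows "(\<Sum>k<n. d k * \<mu> e ^ k) = 0"
proof -
  let ?T = "upper_ones_mat n \<kappa> \<mu>"
  obtain v :: "complex vec" where v: "v \<in> carrier_vec n" "?T *\<^sub>v v = \<mu> e \<cdot>\<^sub>v v" and "v $ m \<noteq> 0"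
    using upper_ones_mat_eigenvector[OF inj e(1)] sep e m by metis
  have "(\<Sum>k<n. d k * \<mu> e ^ k) * v $ m = (\<Sum>k<n. d k * (?T ^\<^sub>m k *\<^sub>v v) $ m)"
    using pow_mat_mult_eigenvector[OF upper_ones_mat_carrier v] v(1) m
    by (simp add: sum_distrib_right mult.assoc)
  also have "\<dots> = (\<Sum>k<n. \<Sum>b<n. d k * (?T ^\<^sub>m k) $$ (m, b) * v $ b)"
    using v(1) m
    by (simp add: index_mult_mat_vec_sum[of _ n n] sum_distrib_left mult.assoc del: index_mult_mat_vec)
  also have "\<dots> = (\<Sum>b<n. (\<Sum>k<n. d k * (?T ^\<^sub>m k) $$ (m, b)) * v $ b)"
    by (subst sum.swap) (simp add: sum_distrib_right)
  also have "\<dots> = 0" using row by simp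
  finally show ?thesis using \<open>v $ m \<noteq> 0\<close> by simp
qed

lemma poly_coeffs_eq_0_if_distinct_roots:
  fixes x d :: "nat \<Rightarrow> 'a :: idom"
  assumes inj: "inj_on x {..<n}" and roots: "\<And>e. e < n \<Longrightarrow> (\<Sum>k<n. d k * x e ^ k) = 0"
    and k: "k < n"
  shows "d k = 0"
proof -
  define p where "p = (\<Sum>k<n. monom (d k) k)"
  have coeff_p: "coeff p j = (if j < n then d j else 0)" for j
    unfolding p_def by (simp add: coeff_sum coeff_monom)
  have "degree p \<le> n - 1"
    by (rule degree_le) (auto simp: coeff_p)
  moreover have "poly p (x e) = 0" if "e < n" for e
    using roots[OF that] by (simp add: p_def poly_sum poly_monom)
  moreover have "card (x ` {..<n}) = n" using inj by (simp add: card_image)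
  ultimately have "p = 0"
    using k by (intro poly_eqI_degree[of "x ` {..<n}"]) auto
  then show ?thesis using coeff_p[of k] k by simp
qed

definition powers_independent_on_cross :: "nat \<Rightarrow> nat \<Rightarrow> complex mat \<Rightarrow> bool" where
  "powers_independent_on_cross n m T \<longleftrightarrow>
    (\<forall>d. (\<forall>b<n. (\<Sum>k<n. d k * (T ^\<^sub>m k) $$ (m, b)) = 0) \<and> (\<forall>a<n. (\<Sum>k<n. d k * (T ^\<^sub>m k) $$ (a, m)) = 0)
      \<longrightarrow> (\<forall>k<n. d k = 0))"

lemma upper_ones_mat_powers_independent_on_cross:
  assumes inj: "inj_on \<kappa> {..<n}"
    and sep: "\<forall>c<n. \<forall>d<n. c \<noteq> d \<longrightarrow> \<mu> c - \<mu> d \<noteq> 0 \<and> \<mu> c - \<mu> d + 1 \<noteq> 0"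
    and m: "m < n"
  shows "powers_independent_on_cross n m (upper_ones_mat n \<kappa> \<mu>)"
  unfolding powers_independent_on_cross_def
proof (intro allI impI)
  fix d k assume cross: "(\<forall>b<n. (\<Sum>k<n. d k * (upper_ones_mat n \<kappa> \<mu> ^\<^sub>m k) $$ (m, b)) = 0)
    \<and> (\<forall>a<n. (\<Sum>k<n. d k * (upper_ones_mat n \<kappa> \<mu> ^\<^sub>m k) $$ (a, m)) = 0)"
    and k: "k < n"
  have "(\<Sum>k<n. d k * \<mu> e ^ k) = 0" if e: "e < n" for e
  proof (cases "\<kappa> m \<le> \<kappa> e")
    case True
    then show ?thesis using upper_ones_mat_row_root[OF inj sep m e] cross by blast
  next
    case False
    \<comment> \<open>transposition reverses \<open>\<kappa>\<close> and turns the column condition into a row condition\<close>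
    have "upper_ones_mat n (\<lambda>a. - \<kappa> a) \<mu> ^\<^sub>m k = transpose_mat (upper_ones_mat n \<kappa> \<mu> ^\<^sub>m k)" for k
      by (simp add: transpose_pow_mat[OF upper_ones_mat_carrier] transpose_upper_ones_mat)
    then have "\<forall>b<n. (\<Sum>k<n. d k * (upper_ones_mat n (\<lambda>a. - \<kappa> a) \<mu> ^\<^sub>m k) $$ (m, b)) = 0"
      using cross m by simp
    moreover have "inj_on (\<lambda>a. - \<kappa> a) {..<n}" using inj by (simp add: inj_on_def)
    ultimately show ?thesis using upper_ones_mat_row_root[OF _ sep m e] False by simp
  qed
  moreover have "inj_on \<mu> {..<n}" using sep by (auto simp: inj_on_def)
  ultimately show "d k = 0" using poly_coeffs_eq_0_if_distinct_roots k by blast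
qed

section \<open>Differentials of the functions \<open>f\<^sub>i\<^sub>,\<^sub>j\<close>\<close>

lemma mat_trace_carrier: "X \<in> carrier_mat n n \<Longrightarrow> mat_trace X = (\<Sum>a<n. X $$ (a, a))"
  by (simp add: mat_trace_def)

lemma mat_trace_add:
  "X \<in> carrier_mat n n \<Longrightarrow> Y \<in> carrier_mat n n \<Longrightarrow> mat_trace (X + Y) = mat_trace X + mat_trace Y"
  by (simp add: mat_trace_def sum.distrib)

lemma mat_trace_mult_comm:
  assumes X: "X \<in> carrier_mat n n" and Y: "Y \<in> carrier_mat n n"
  shows "mat_trace (X * Y) = mat_trace (Y * X)"
proof -
  have "mat_trace (X * Y) = (\<Sum>a<n. \<Sum>c<n. X $$ (a, c) * Y $$ (c, a))"
    unfolding mat_trace_def using assms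
    by (intro sum.cong) (simp_all add: index_mult_mat_sum[OF X Y] index_mult_mat(2) del: index_mult_mat(1))
  also have "\<dots> = (\<Sum>c<n. \<Sum>a<n. Y $$ (c, a) * X $$ (a, c))"
    by (subst sum.swap) (simp add: mult.commute)
  also have "\<dots> = mat_trace (Y * X)"
    unfolding mat_trace_def using assms
    by (intro sum.cong) (simp_all add: index_mult_mat_sum[OF Y X] index_mult_mat(2) del: index_mult_mat(1))
  finally show ?thesis .
qed

lemma pow_mat_add:
  assumes "(A :: 'a :: semiring_1 mat) \<in> carrier_mat n n"
  shows "A ^\<^sub>m (k + l) = A ^\<^sub>m k * A ^\<^sub>m l"
  by (induction l) (use assms in \<open>simp_all add: assoc_mult_mat[of _ n n _ n _ n]\<close>)

fun pow_mat_deriv :: "nat \<Rightarrow> complex mat \<Rightarrow> complex mat \<Rightarrow> nat \<Rightarrow> complex mat" where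
  "pow_mat_deriv n A B 0 = 0\<^sub>m n n"
| "pow_mat_deriv n A B (Suc j) = pow_mat_deriv n A B j * A + A ^\<^sub>m j * B"

lemma pow_mat_deriv_carrier [simp]:
  "A \<in> carrier_mat n n \<Longrightarrow> B \<in> carrier_mat n n \<Longrightarrow> pow_mat_deriv n A B j \<in> carrier_mat n n"
  by (induction j) auto

lemma has_field_derivative_index_pow_mat:
  assumes A: "A \<in> carrier_mat n n" and B: "B \<in> carrier_mat n n" and ab: "a < n" "b < n"
  shows "((\<lambda>t. ((A + t \<cdot>\<^sub>m B) ^\<^sub>m j) $$ (a, b)) has_field_derivative pow_mat_deriv n A B j $$ (a, b)) (at 0)"
  using ab
proof (induction j arbitrary: b)
  case 0
  then show ?case using A by simp
next
  case (Suc j)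
  have "((A + t \<cdot>\<^sub>m B) ^\<^sub>m Suc j) $$ (a, b)
      = (\<Sum>c<n. ((A + t \<cdot>\<^sub>m B) ^\<^sub>m j) $$ (a, c) * (A $$ (c, b) + t * B $$ (c, b)))" for t
    using A B Suc.prems
    by (simp add: index_mult_mat_sum[of _ n n _ n] del: index_mult_mat)
  moreover have "((\<lambda>t. \<Sum>c<n. ((A + t \<cdot>\<^sub>m B) ^\<^sub>m j) $$ (a, c) * (A $$ (c, b) + t * B $$ (c, b)))
      has_field_derivative (\<Sum>c<n. pow_mat_deriv n A B j $$ (a, c) * A $$ (c, b)
        + (A ^\<^sub>m j) $$ (a, c) * B $$ (c, b))) (at 0)"
  proof -
    have "A + 0 \<cdot>\<^sub>m B = A" by (rule eq_matI) (use A B in auto)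
    then show ?thesis using Suc by (auto intro!: derivative_eq_intros sum.cong)
  qed
  moreover have "(\<Sum>c<n. pow_mat_deriv n A B j $$ (a, c) * A $$ (c, b) + (A ^\<^sub>m j) $$ (a, c) * B $$ (c, b))
      = pow_mat_deriv n A B (Suc j) $$ (a, b)"
    using A B Suc.prems
    by (simp add: index_mult_mat_sum[of _ n n _ n] index_mult_mat(2,3) sum.distrib
        del: index_mult_mat(1))
  ultimately show ?case by simp
qed

lemma mat_trace_pow_mat_deriv_mult:
  assumes A: "A \<in> carrier_mat n n" and B: "B \<in> carrier_mat n n"
  shows "mat_trace (pow_mat_deriv n A B j * A ^\<^sub>m k) = of_nat j * mat_trace (A ^\<^sub>m (j + k - 1) * B)"
proof (induction j arbitrary: k)
  case 0
  then show ?case using A by (simp add: mat_trace_def)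
next
  case (Suc j)
  let ?Q = "pow_mat_deriv n A B j"
  have Q: "?Q \<in> carrier_mat n n" using A B by simp
  have "pow_mat_deriv n A B (Suc j) * A ^\<^sub>m k = ?Q * A ^\<^sub>m Suc k + A ^\<^sub>m j * B * A ^\<^sub>m k"
  proof -
    have "pow_mat_deriv n A B (Suc j) * A ^\<^sub>m k = ?Q * A * A ^\<^sub>m k + A ^\<^sub>m j * B * A ^\<^sub>m k"
      unfolding pow_mat_deriv.simps using mult_carrier_mat[OF Q A] mult_carrier_mat[OF pow_carrier_mat[OF A] B] A
      by (intro add_mult_distrib_mat) auto
    moreover have "?Q * A * A ^\<^sub>m k = ?Q * A ^\<^sub>m Suc k"
      using Q A pow_mat_commute[OF A, of k] by (simp add: assoc_mult_mat[of _ n n _ n _ n])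
    ultimately show ?thesis by simp
  qed
  moreover have "mat_trace (A ^\<^sub>m j * B * A ^\<^sub>m k) = mat_trace (A ^\<^sub>m (j + k) * B)"
  proof -
    have "mat_trace (A ^\<^sub>m j * B * A ^\<^sub>m k) = mat_trace (A ^\<^sub>m k * (A ^\<^sub>m j * B))"
      using A B by (intro mat_trace_mult_comm) auto
    also have "\<dots> = mat_trace (A ^\<^sub>m (j + k) * B)"
      using A B pow_mat_add[OF A, of k j] by (simp add: assoc_mult_mat[of _ n n _ n _ n] add.commute)
    finally show ?thesis .
  qed
  moreover have "?Q * A ^\<^sub>m Suc k \<in> carrier_mat n n" "A ^\<^sub>m j * B * A ^\<^sub>m k \<in> carrier_mat n n"
    using Q A B by (auto intro!: mult_carrier_mat)
  ultimately have "mat_trace (pow_mat_deriv n A B (Suc j) * A ^\<^sub>m k)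
      = mat_trace (?Q * A ^\<^sub>m Suc k) + mat_trace (A ^\<^sub>m (j + k) * B)"
    using mat_trace_add by metis
  then show ?case using Suc.IH[of "Suc k"] by (simp add: algebra_simps)
qed

lemma upper_left_carrier [simp]: "upper_left i X \<in> carrier_mat i i"
  and dim_upper_left [simp]: "dim_row (upper_left i X) = i" "dim_col (upper_left i X) = i"
  by (simp_all add: upper_left_def)

lemma upper_left_add_smult:
  assumes "X \<in> carrier_mat N N" "Y \<in> carrier_mat N N" "i \<le> N"
  shows "upper_left i (X + t \<cdot>\<^sub>m Y) = upper_left i X + t \<cdot>\<^sub>m upper_left i Y"
  by (rule eq_matI) (use assms in \<open>auto simp: upper_left_def\<close>)

lemma differential_f_ij:
  assumes X: "X \<in> carrier_mat N N" and Y: "Y \<in> carrier_mat N N" and i: "i \<le> N"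
  shows "differential (f_ij i j) X Y = of_nat j * mat_trace (upper_left i X ^\<^sub>m (j - 1) * upper_left i Y)"
proof -
  let ?A = "upper_left i X" and ?B = "upper_left i Y"
  have "(\<lambda>t. f_ij i j (X + t \<cdot>\<^sub>m Y)) = (\<lambda>t. \<Sum>a<i. ((?A + t \<cdot>\<^sub>m ?B) ^\<^sub>m j) $$ (a, a))"
    using upper_left_add_smult[OF X Y i] by (simp add: f_ij_def mat_trace_def)
  moreover have "((\<lambda>t. \<Sum>a<i. ((?A + t \<cdot>\<^sub>m ?B) ^\<^sub>m j) $$ (a, a))
      has_field_derivative mat_trace (pow_mat_deriv i ?A ?B j)) (at 0)"
    unfolding mat_trace_carrier[OF pow_mat_deriv_carrier[OF upper_left_carrier upper_left_carrier]]
    by (intro DERIV_sum has_field_derivative_index_pow_mat upper_left_carrier) auto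
  ultimately have "differential (f_ij i j) X Y = mat_trace (pow_mat_deriv i ?A ?B j)"
    unfolding differential_def by (simp add: DERIV_imp_deriv)
  also have "\<dots> = of_nat j * mat_trace (?A ^\<^sub>m (j - 1) * ?B)"
    using mat_trace_pow_mat_deriv_mult[of ?A i ?B j 0]
      right_mult_one_mat[OF pow_mat_deriv_carrier[OF upper_left_carrier upper_left_carrier]] by simp
  finally show ?thesis .
qed

lemma upper_left_mat_unit:
  assumes "i \<le> N" "a < N" "b < N"
  shows "upper_left i (mat_unit N a b) = (if a < i \<and> b < i then mat_unit i a b else 0\<^sub>m i i)"
  by (rule eq_matI) (use assms in \<open>auto simp: upper_left_def\<close>)

lemma mat_trace_mult_mat_unit:
  assumes M: "M \<in> carrier_mat n n" and ab: "a < n" "b < n"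
  shows "mat_trace (M * mat_unit n b a) = M $$ (a, b)"
proof -
  have "mat_trace (M * mat_unit n b a) = (\<Sum>k<n. if k = a then M $$ (k, b) else 0)"
    unfolding mat_trace_carrier[OF mult_carrier_mat[OF M mat_unit_carrier]]
    using M ab by (intro sum.cong) (simp_all add: index_mult_mat_unit del: index_mult_mat(1))
  then show ?thesis using ab by simp
qed

lemma differential_f_ij_mat_unit:
  assumes X: "X \<in> carrier_mat N N" and i: "i \<le> N" and ab: "a < N" "b < N"
  shows "differential (f_ij i j) X (mat_unit N b a)
    = (if a < i \<and> b < i then of_nat j * (upper_left i X ^\<^sub>m (j - 1)) $$ (a, b) else 0)"
  using differential_f_ij[OF X mat_unit_carrier i] upper_left_mat_unit[OF i ab(2,1)]
    mat_trace_mult_mat_unit[OF pow_carrier_mat[OF upper_left_carrier], of a i b]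
  by (auto simp: mat_trace_def)

section \<open>A criterion for strong regularity\<close>

lemma finite_GZ_index: "finite (GZ_index N)"
proof -
  have "GZ_index N \<subseteq> {..N} \<times> {..N}" unfolding GZ_index_def by auto
  then show ?thesis by (rule finite_subset) simp
qed

lemma sum_GZ_index_level:
  assumes i: "1 \<le> i" "i \<le> N" and zero: "\<And>p. p \<in> GZ_index N \<Longrightarrow> fst p \<noteq> i \<Longrightarrow> g p = 0"
  shows "(\<Sum>p\<in>GZ_index N. g p) = (\<Sum>k<i. g (i, Suc k))"
proof -
  have level: "(\<lambda>k. (i, Suc k)) ` {..<i} = {p \<in> GZ_index N. fst p = i}"
  proof
    show "(\<lambda>k. (i, Suc k)) ` {..<i} \<subseteq> {p \<in> GZ_index N. fst p = i}"
      using i by (auto simp: GZ_index_def)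
  next
    show "{p \<in> GZ_index N. fst p = i} \<subseteq> (\<lambda>k. (i, Suc k)) ` {..<i}"
    proof
      fix p assume "p \<in> {p \<in> GZ_index N. fst p = i}"
      then have "p = (i, Suc (snd p - 1))" "snd p - 1 < i" by (auto simp: GZ_index_def)
      then show "p \<in> (\<lambda>k. (i, Suc k)) ` {..<i}" by (metis image_eqI lessThan_iff)
    qed
  qed
  have "(\<Sum>p\<in>GZ_index N. g p) = (\<Sum>p\<in>{p \<in> GZ_index N. fst p = i}. g p)"
    using zero by (intro sum.mono_neutral_right finite_GZ_index) auto
  also have "\<dots> = (\<Sum>k<i. g (i, Suc k))"
    unfolding level[symmetric] by (rule sum.reindex_cong[where l = "\<lambda>k. (i, Suc k)"]) (auto simp: inj_on_def)
  finally show ?thesis .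
qed

lemma strongly_regularI:
  assumes X: "X \<in> carrier_mat N N"
    and indep: "\<And>i. 1 \<le> i \<Longrightarrow> i \<le> N \<Longrightarrow> powers_independent_on_cross i (i - 1) (upper_left i X)"
  shows "strongly_regular N X"
  unfolding strongly_regular_def
proof (intro conjI allI impI ballI)
  show "X \<in> carrier_mat N N" by (rule X)
  fix c :: "nat \<times> nat \<Rightarrow> complex"
  assume vanish: "\<forall>y\<in>carrier_mat N N. (\<Sum>(i, j)\<in>GZ_index N. c (i, j) * differential (f_ij i j) X y) = 0"
  define g where "g a b p = c p * (if a < fst p \<and> b < fst p
      then of_nat (snd p) * (upper_left (fst p) X ^\<^sub>m (snd p - 1)) $$ (a, b) else 0)" for a b p
  have sum_g: "(\<Sum>p\<in>GZ_index N. g a b p) = 0" if ab: "a < N" "b < N" for a b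
  proof -
    have "(\<Sum>p\<in>GZ_index N. g a b p) = (\<Sum>(i, j)\<in>GZ_index N. c (i, j) * differential (f_ij i j) X (mat_unit N b a))"
      using ab by (intro sum.cong) (auto simp: g_def GZ_index_def differential_f_ij_mat_unit[OF X])
    then show ?thesis using vanish by simp
  qed
  \<comment> \<open>downward induction on the level \<open>i\<close>: testing against \<open>E\<^sub>b\<^sub>a\<close> with \<open>a\<close> or \<open>b\<close> equal to
    \<open>i - 1\<close> sees no level below \<open>i\<close>\<close>
  have "\<forall>j. (i, j) \<in> GZ_index N \<longrightarrow> c (i, j) = 0" for i
  proof (induction "N - i" arbitrary: i rule: less_induct)
    case less
    show ?case
    proof (intro allI impI)
      fix j assume "(i, j) \<in> GZ_index N"
      then have i: "1 \<le> i" "i \<le> N" and j: "1 \<le> j" "j \<le> i" by (auto simp: GZ_index_def)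
      define d where "d k = c (i, Suc k) * of_nat (Suc k)" for k
      have "(\<Sum>k<i. d k * (upper_left i X ^\<^sub>m k) $$ (a, b)) = 0"
        if ab: "a < i" "b < i" "a = i - 1 \<or> b = i - 1" for a b
      proof -
        have "g a b p = 0" if p: "p \<in> GZ_index N" "fst p \<noteq> i" for p
        proof (cases "fst p < i")
          case True
          then show ?thesis using ab by (auto simp: g_def)
        next
          case False
          then have "N - fst p < N - i" using p i by (auto simp: GZ_index_def)
          then show ?thesis using less[of "fst p"] p by (cases p) (simp add: g_def)
        qed
        then have "(\<Sum>p\<in>GZ_index N. g a b p) = (\<Sum>k<i. g a b (i, Suc k))"
          by (rule sum_GZ_index_level[OF i])
        then show ?thesis using sum_g[of a b] ab i by (simp add: g_def d_def mult_ac)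
      qed
      then have "\<forall>k<i. d k = 0"
        using indep[OF i, unfolded powers_independent_on_cross_def, rule_format, of d] i by simp
      then show "c (i, j) = 0" using j d_def[of "j - 1"] by simp
    qed
  qed
  then show "c p = 0" if "p \<in> GZ_index N" for p using that by (cases p) blast
qed

theorem proposition5p2:
  fixes n :: nat and B :: "complex mat set"
  assumes "borel_subalgebra (n + 1) B"
    and "diagonal_cartan (n + 1) \<subseteq> B"
  shows "\<exists>x\<in>B. strongly_regular (n + 1) x"
proof -
  let ?N = "n + 1"
  obtain R where R: "strict_linear_order_on {..<?N} R" and B: "B = pattern_algebra ?N R"
    using borel_subalgebra_eq_pattern_algebra[OF assms] by blast
  define \<kappa> where "\<kappa> a = int (order_rank ?N R a)" for a
  define \<mu> :: "nat \<Rightarrow> complex" where "\<mu> a = of_nat (2 * a)" for a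
  let ?X = "upper_ones_mat ?N \<kappa> \<mu>"
  have "?X \<in> B"
    using order_rank_less_iff[OF R] unfolding B pattern_algebra_def \<kappa>_def by auto
  moreover have "strongly_regular ?N ?X"
  proof (rule strongly_regularI)
    fix i assume i: "1 \<le> i" "i \<le> ?N"
    have "inj_on \<kappa> {..<i}"
      using inj_on_order_rank[OF R] i unfolding \<kappa>_def by (auto simp: inj_on_def)
    moreover have "\<mu> c - \<mu> d \<noteq> 0 \<and> \<mu> c - \<mu> d + 1 \<noteq> 0" if "c \<noteq> d" for c d
    proof -
      have "2 * c + 1 \<noteq> 2 * d" by presburger
      then have "(of_nat (2 * c + 1) :: complex) \<noteq> of_nat (2 * d)" by (metis of_nat_eq_iff)
      then show ?thesis using that by (simp add: \<mu>_def algebra_simps)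
    qed
    ultimately show "powers_independent_on_cross i (i - 1) (upper_left i ?X)"
      using i by (simp add: upper_left_upper_ones_mat upper_ones_mat_powers_independent_on_cross)
  qed simp
  ultimately show ?thesis by blast
qed

end
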